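(* Every palindrome that is a factor of $\Lambda_\theta$ contains at most three distinct letters.
   Context: Fix an irrational $\theta$ with $1<\theta<2$. Let $S(\theta)=\{i+j\theta : i,j\in\mathbb{N}_0\}$ and let $s_0<s_1<s_2<\cdots$ be its elements in increasing order. Put $\delta(n)=s_{n+1}-s_n$. Let $\lambda$ be the map from the set of values $\{\delta(n):n\ge0\}$ to $\mathbb{N}_0$ that numbers the distinct values in order of first occurrence: $\lambda(\delta(0))=0$, and the $m$-th distinct value to appear in the sequence $\delta(0),\delta(1),\dots$ (counting from $m=0$) receives label $m$. The Lambda word is the right-infinite word $\Lambda_\theta=\lambda(\delta(0))\lambda(\delta(1))\lambda(\delta(2))\cdots$ over the alphabet $\mathbb{N}_0$. A factor is a finite block of consecutive letters; a palindrome is a finite word equal to its reversal. *)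

theory Defs
  imports Complex_Main
begin

definition Sset :: "real \<Rightarrow> real set" where
  "Sset \<theta> = {real i + real j * \<theta> | i j. True}"

definition s_seq :: "real \<Rightarrow> nat \<Rightarrow> real" where
  "s_seq \<theta> n = (THE x. x \<in> Sset \<theta> \<and> card {y \<in> Sset \<theta>. y < x} = n)"

definition delta :: "real \<Rightarrow> nat \<Rightarrow> real" where
  "delta \<theta> n = s_seq \<theta> (Suc n) - s_seq \<theta> n"

text \<open>Label of a gap value by order of first occurrence: the label of delta(n) is the
  number of distinct values occurring strictly before the first occurrence of delta(n).\<close>
definition Lambda_word :: "real \<Rightarrow> nat \<Rightarrow> nat" where
  "Lambda_word \<theta> n =
     card (delta \<theta> ` {..< (LEAST k. delta \<theta> k = delta \<theta> n)})"

definition is_factor :: "'a list \<Rightarrow> (nat \<Rightarrow> 'a) \<Rightarrow> bool" where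
  "is_factor u w \<longleftrightarrow> (\<exists>i. u = map w [i..<i + length u])"

definition palindrome :: "'a list \<Rightarrow> bool" where
  "palindrome u \<longleftrightarrow> rev u = u"

end

theory Submission
  imports Defs
begin

text \<open>Labels of distinct gap values are distinct, so a palindromic factor of the Lambda word
  is a palindromic run of consecutive gaps of \<open>S(\<theta>)\<close> between \<open>s(i)\<close> and \<open>s(i + L)\<close>. The run is
  symmetric about its midpoint: \<open>s(i + k) + s(i + L - k) = c + d\<theta>\<close> for all \<open>k \<le> L\<close>. So with every
  point \<open>a + b\<theta>\<close> of the run, its mirror image \<open>(c - a) + (d - b)\<theta>\<close> lies in \<open>S(\<theta>)\<close>, and the gap
  above \<open>a + b\<theta>\<close> is the least of \<open>1\<close>, the distances \<open>\<lceil>m\<theta>\<rceil> - m\<theta>\<close> for \<open>1 \<le> m \<le> b\<close> (moving down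
  from the point) and \<open>m\<theta> - \<lfloor>m\<theta>\<rfloor>\<close> for \<open>1 \<le> m \<le> d - b\<close> (moving up from its mirror image). As in
  the three-gap theorem of Steinhaus, this minimum takes at most three values, all determined
  by \<open>d\<close> alone.\<close>

section \<open>Distances of multiples of an irrational to the integers\<close>

lemma irrational_int_mult_eq_int:
  assumes "t \<notin> \<rat>" "real_of_int p = real_of_int q * t"
  shows "q = 0"
proof (rule ccontr)
  assume "q \<noteq> 0"
  then have "t = real_of_int p / real_of_int q" using assms(2) by (simp add: field_simps)
  then show False using assms(1) by (simp add: Rats_divide)
qed

lemma irrational_nat_coords_unique:
  fixes a b c d :: nat
  assumes "t \<notin> \<rat>" "real a + real b * t = real c + real d * t"
  shows "a = c \<and> b = d"
proof -
  have "real_of_int (int a - int c) = real_of_int (int d - int b) * t"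
    using assms(2) by (simp add: algebra_simps)
  then have "int d - int b = 0" using irrational_int_mult_eq_int[OF assms(1)] by blast
  then have "b = d" by simp
  then show ?thesis using assms(2) by simp
qed

definition dist_ceil :: "real \<Rightarrow> nat \<Rightarrow> real" where
  "dist_ceil t m = real_of_int \<lceil>real m * t\<rceil> - real m * t"

definition dist_floor :: "real \<Rightarrow> nat \<Rightarrow> real" where
  "dist_floor t m = real m * t - real_of_int \<lfloor>real m * t\<rfloor>"

lemma irrational_mult_not_int:
  assumes "t \<notin> \<rat>" "1 \<le> m"
  shows "real_of_int \<lfloor>real m * t\<rfloor> \<noteq> real m * t"
  using irrational_int_mult_eq_int[OF assms(1), of "\<lfloor>real m * t\<rfloor>" "int m"] assms(2) by auto

lemma dist_ceil_add_dist_floor: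
  assumes "t \<notin> \<rat>" "1 \<le> m"
  shows "dist_ceil t m + dist_floor t m = 1"
proof -
  have "\<lceil>real m * t\<rceil> = \<lfloor>real m * t\<rfloor> + 1"
    using irrational_mult_not_int[OF assms] by (metis ceiling_altdef of_int_floor_cancel)
  then show ?thesis unfolding dist_ceil_def dist_floor_def by simp
qed

lemma dist_floor_pos:
  assumes "t \<notin> \<rat>" "1 \<le> m"
  shows "0 < dist_floor t m"
  using irrational_mult_not_int[OF assms] of_int_floor_le[of "real m * t"]
  unfolding dist_floor_def by linarith

lemma dist_ceil_pos:
  assumes "t \<notin> \<rat>" "1 \<le> m"
  shows "0 < dist_ceil t m"
  using dist_ceil_add_dist_floor[OF assms] real_of_int_floor_add_one_gt[of "real m * t"]
  unfolding dist_floor_def by linarith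

lemma dist_ceil_inj:
  assumes "t \<notin> \<rat>" "dist_ceil t m = dist_ceil t m'"
  shows "m = m'"
proof -
  have "real_of_int (\<lceil>real m * t\<rceil> - \<lceil>real m' * t\<rceil>) = real_of_int (int m - int m') * t"
    using assms(2) unfolding dist_ceil_def by (simp add: algebra_simps)
  then show ?thesis using irrational_int_mult_eq_int[OF assms(1)] by fastforce
qed

lemma dist_floor_inj:
  assumes "t \<notin> \<rat>" "dist_floor t m = dist_floor t m'"
  shows "m = m'"
proof -
  have "real_of_int (\<lfloor>real m * t\<rfloor> - \<lfloor>real m' * t\<rfloor>) = real_of_int (int m - int m') * t"
    using assms(2) unfolding dist_floor_def by (simp add: algebra_simps)
  then show ?thesis using irrational_int_mult_eq_int[OF assms(1)] by fastforce
qed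

lemma dist_ceil_le:
  assumes "0 < real_of_int p - real m * t"
  shows "dist_ceil t m \<le> real_of_int p - real m * t"
proof -
  have "\<lceil>real m * t\<rceil> \<le> p" using assms by (simp add: ceiling_le_iff)
  then show ?thesis unfolding dist_ceil_def by simp
qed

lemma dist_floor_le:
  assumes "0 < real m * t - real_of_int p"
  shows "dist_floor t m \<le> real m * t - real_of_int p"
proof -
  have "p \<le> \<lfloor>real m * t\<rfloor>" using assms by (simp add: le_floor_iff)
  then show ?thesis unfolding dist_floor_def by simp
qed

lemma dist_ceil_add_le:
  "0 < dist_ceil t m - dist_floor t m' \<Longrightarrow> dist_ceil t (m + m') \<le> dist_ceil t m - dist_floor t m'"
  using dist_ceil_le[of "\<lceil>real m * t\<rceil> + \<lfloor>real m' * t\<rfloor>" "m + m'" t]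
  unfolding dist_ceil_def dist_floor_def by (simp add: algebra_simps)

lemma dist_floor_add_le:
  "0 < dist_floor t m - dist_ceil t m' \<Longrightarrow> dist_floor t (m + m') \<le> dist_floor t m - dist_ceil t m'"
  using dist_floor_le[of "m + m'" t "\<lfloor>real m * t\<rfloor> + \<lceil>real m' * t\<rceil>"]
  unfolding dist_ceil_def dist_floor_def by (simp add: algebra_simps)

lemma dist_floor_diff_le_ceil_diff:
  "m < m' \<Longrightarrow> 0 < dist_ceil t m - dist_ceil t m' \<Longrightarrow>
    dist_floor t (m' - m) \<le> dist_ceil t m - dist_ceil t m'"
  using dist_floor_le[of "m' - m" t "\<lceil>real m' * t\<rceil> - \<lceil>real m * t\<rceil>"]
  unfolding dist_ceil_def dist_floor_def by (simp add: algebra_simps of_nat_diff)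

lemma dist_ceil_diff_le_floor_diff:
  "m < m' \<Longrightarrow> 0 < dist_floor t m - dist_floor t m' \<Longrightarrow>
    dist_ceil t (m' - m) \<le> dist_floor t m - dist_floor t m'"
  using dist_ceil_le[of "\<lfloor>real m' * t\<rfloor> - \<lfloor>real m * t\<rfloor>" "m' - m" t]
  unfolding dist_ceil_def dist_floor_def by (simp add: algebra_simps of_nat_diff)

lemma dist_ceil_diff_le_sum:
  "m' < m \<Longrightarrow> 0 < dist_ceil t m + dist_floor t m' \<Longrightarrow>
    dist_ceil t (m - m') \<le> dist_ceil t m + dist_floor t m'"
  using dist_ceil_le[of "\<lceil>real m * t\<rceil> - \<lfloor>real m' * t\<rfloor>" "m - m'" t]
  unfolding dist_ceil_def dist_floor_def by (simp add: algebra_simps of_nat_diff)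

lemma dist_floor_diff_le_sum:
  "m < m' \<Longrightarrow> 0 < dist_ceil t m + dist_floor t m' \<Longrightarrow>
    dist_floor t (m' - m) \<le> dist_ceil t m + dist_floor t m'"
  using dist_floor_le[of "m' - m" t "\<lfloor>real m' * t\<rfloor> - \<lceil>real m * t\<rceil>"]
  unfolding dist_ceil_def dist_floor_def by (simp add: algebra_simps of_nat_diff)

section \<open>The three-gap theorem\<close>

text \<open>\<open>min_gap t d b\<close> will be the gap above a point \<open>a + b t\<close> of \<open>S(t)\<close> whose mirror image
  \<open>(c - a) + (d - b) t\<close> also lies in \<open>S(t)\<close>.\<close>
definition min_gap :: "real \<Rightarrow> nat \<Rightarrow> nat \<Rightarrow> real" where
  "min_gap t d b = Min (insert 1 (dist_ceil t ` {1..b} \<union> dist_floor t ` {1..d - b}))"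

lemma min_gap_le_one: "min_gap t d b \<le> 1"
  unfolding min_gap_def by simp

lemma min_gap_le_dist_ceil: "m \<in> {1..b} \<Longrightarrow> min_gap t d b \<le> dist_ceil t m"
  unfolding min_gap_def by (rule Min_le) auto

lemma min_gap_le_dist_floor: "m \<in> {1..d - b} \<Longrightarrow> min_gap t d b \<le> dist_floor t m"
  unfolding min_gap_def by (rule Min_le) auto

lemma min_gap_cases:
  obtains "min_gap t d b = 1"
  | m where "m \<in> {1..b}" "min_gap t d b = dist_ceil t m"
  | m where "m \<in> {1..d - b}" "min_gap t d b = dist_floor t m"
proof -
  have "min_gap t d b \<in> insert 1 (dist_ceil t ` {1..b} \<union> dist_floor t ` {1..d - b})"
    unfolding min_gap_def by (rule Min_in) auto
  then show ?thesis using that by blast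
qed

lemma min_gap_eqI:
  assumes "g \<le> 1"
    and "\<And>m. m \<in> {1..b} \<Longrightarrow> g \<le> dist_ceil t m"
    and "\<And>m. m \<in> {1..d - b} \<Longrightarrow> g \<le> dist_floor t m"
    and "1 \<le> g \<or> (\<exists>m\<in>{1..b}. dist_ceil t m \<le> g) \<or> (\<exists>m\<in>{1..d - b}. dist_floor t m \<le> g)"
  shows "min_gap t d b = g"
proof (rule antisym)
  show "g \<le> min_gap t d b" unfolding min_gap_def using assms(1-3) by auto
  show "min_gap t d b \<le> g"
    using assms(4)
  proof (elim disjE bexE)
    assume "1 \<le> g"
    then show ?thesis using min_gap_le_one[of t d b] by linarith
  next
    fix m assume "m \<in> {1..b}" "dist_ceil t m \<le> g"
    then show ?thesis using min_gap_le_dist_ceil[of m b t d] by linarith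
  next
    fix m assume "m \<in> {1..d - b}" "dist_floor t m \<le> g"
    then show ?thesis using min_gap_le_dist_floor[of m d b t] by linarith
  qed
qed

context
  fixes t :: real and d mA mB :: nat
  assumes irrational: "t \<notin> \<rat>"
    and mA: "mA \<in> {1..d}" and mA_min: "\<And>m. m \<in> {1..d} \<Longrightarrow> dist_ceil t mA \<le> dist_ceil t m"
    and mB: "mB \<in> {1..d}" and mB_min: "\<And>m. m \<in> {1..d} \<Longrightarrow> dist_floor t mB \<le> dist_floor t m"
begin

lemma min_gap_eq_dist_ceil_min:
  assumes "mA \<le> b" "b \<le> d"
  shows "min_gap t d b = dist_ceil t mA"
proof -
  have upper: "min_gap t d b \<le> dist_ceil t mA" using min_gap_le_dist_ceil mA assms by simp
  have "dist_ceil t mA \<le> min_gap t d b"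
  proof (cases rule: min_gap_cases[of t d b])
    case 1
    have "1 \<le> mA" using mA by simp
    then show ?thesis
      using 1 dist_ceil_add_dist_floor[OF irrational] dist_floor_pos[OF irrational] by fastforce
  next
    case (2 m)
    then show ?thesis using mA_min assms by simp
  next
    case (3 m)
    have "dist_ceil t mA \<le> dist_floor t m"
    proof (rule ccontr)
      assume "\<not> ?thesis"
      then have "dist_ceil t (mA + m) \<le> dist_ceil t mA - dist_floor t m"
        using dist_ceil_add_le by force
      moreover have "dist_ceil t mA \<le> dist_ceil t (mA + m)" using mA_min[of "mA + m"] 3 assms mA by (simp, arith)
      ultimately show False using dist_floor_pos[OF irrational, of m] 3 by simp
    qed
    then show ?thesis using 3 by simp
  qed
  then show ?thesis using upper by simp
qed

lemma min_gap_eq_dist_floor_min: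
  assumes "b < mA" "mB \<le> d - b"
  shows "min_gap t d b = dist_floor t mB"
proof -
  have upper: "min_gap t d b \<le> dist_floor t mB" using min_gap_le_dist_floor mB assms by simp
  have "dist_floor t mB \<le> min_gap t d b"
  proof (cases rule: min_gap_cases[of t d b])
    case 1
    have "1 \<le> mB" using mB by simp
    then show ?thesis
      using 1 dist_ceil_add_dist_floor[OF irrational] dist_ceil_pos[OF irrational] by fastforce
  next
    case (2 m)
    have "dist_floor t mB \<le> dist_ceil t m"
    proof (rule ccontr)
      assume "\<not> ?thesis"
      then have "dist_floor t (mB + m) \<le> dist_floor t mB - dist_ceil t m"
        using dist_floor_add_le by force
      moreover have "dist_floor t mB \<le> dist_floor t (mB + m)" using mB_min[of "mB + m"] 2 assms mB by (simp, arith)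
      ultimately show False using dist_ceil_pos[OF irrational, of m] 2 by simp
    qed
    then show ?thesis using 2 by simp
  next
    case (3 m)
    then show ?thesis using mB_min[of m] by (simp, arith)
  qed
  then show ?thesis using upper by simp
qed

lemma min_gap_eq_min_sum:
  assumes "b < mA" "d - b < mB" "b \<le> d"
  shows "min_gap t d b = min 1 (dist_ceil t mA + dist_floor t mB)"
proof -
  have pos: "0 < dist_ceil t mA" "0 < dist_floor t mB"
    using mA mB dist_ceil_pos[OF irrational] dist_floor_pos[OF irrational] by auto
  have upper: "min_gap t d b \<le> dist_ceil t mA + dist_floor t mB"
  proof (cases mA mB rule: linorder_cases)
    case less
    then have "min_gap t d b \<le> dist_floor t (mB - mA)"
      using mB assms by (intro min_gap_le_dist_floor) auto
    moreover have "dist_floor t (mB - mA) \<le> dist_ceil t mA + dist_floor t mB"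
      using dist_floor_diff_le_sum[OF less] pos by simp
    ultimately show ?thesis by linarith
  next
    case equal
    then show ?thesis using min_gap_le_one dist_ceil_add_dist_floor[OF irrational] mA by simp
  next
    case greater
    then have "min_gap t d b \<le> dist_ceil t (mA - mB)"
      using mA assms by (intro min_gap_le_dist_ceil) auto
    moreover have "dist_ceil t (mA - mB) \<le> dist_ceil t mA + dist_floor t mB"
      using dist_ceil_diff_le_sum[OF greater] pos by simp
    ultimately show ?thesis by linarith
  qed
  have lower: "min 1 (dist_ceil t mA + dist_floor t mB) \<le> min_gap t d b"
  proof (cases rule: min_gap_cases[of t d b])
    case 1
    then show ?thesis by simp
  next
    case (2 m)
    have "dist_ceil t m \<noteq> dist_ceil t mA" using dist_ceil_inj[OF irrational] 2 assms by force
    moreover have "dist_ceil t mA \<le> dist_ceil t m" using mA_min 2 assms by simp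
    ultimately have "dist_floor t (mA - m) \<le> dist_ceil t m - dist_ceil t mA"
      using dist_floor_diff_le_ceil_diff[of m mA] 2 assms by simp
    moreover have "dist_floor t mB \<le> dist_floor t (mA - m)" using mB_min[of "mA - m"] 2 assms mA by (simp, arith)
    ultimately show ?thesis using 2 by simp
  next
    case (3 m)
    have "dist_floor t m \<noteq> dist_floor t mB" using dist_floor_inj[OF irrational] 3 assms by force
    moreover have "dist_floor t mB \<le> dist_floor t m" using mB_min[of m] 3 assms by (simp, arith)
    ultimately have "dist_ceil t (mB - m) \<le> dist_floor t m - dist_floor t mB"
      using dist_ceil_diff_le_floor_diff[of m mB] 3 assms by simp
    moreover have "dist_ceil t mA \<le> dist_ceil t (mB - m)" using mA_min[of "mB - m"] 3 assms mB by (simp, arith)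
    ultimately show ?thesis using 3 by simp
  qed
  show ?thesis using upper lower min_gap_le_one[of t d b] by linarith
qed

end

theorem three_gap:
  assumes "t \<notin> \<rat>"
  shows "card (min_gap t d ` {..d}) \<le> 3"
proof (cases "d = 0")
  case True
  then show ?thesis by simp
next
  case False
  define mA where "mA = arg_min_on (dist_ceil t) {1..d}"
  define mB where "mB = arg_min_on (dist_floor t) {1..d}"
  have mA: "mA \<in> {1..d}" "\<And>m. m \<in> {1..d} \<Longrightarrow> dist_ceil t mA \<le> dist_ceil t m"
    unfolding mA_def using False arg_min_if_finite(1)[of "{1..d}" "dist_ceil t"]
    by (auto intro: arg_min_least)
  have mB: "mB \<in> {1..d}" "\<And>m. m \<in> {1..d} \<Longrightarrow> dist_floor t mB \<le> dist_floor t m"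
    unfolding mB_def using False arg_min_if_finite(1)[of "{1..d}" "dist_floor t"]
    by (auto intro: arg_min_least)
  let ?gaps = "{dist_ceil t mA, dist_floor t mB, min 1 (dist_ceil t mA + dist_floor t mB)}"
  have "min_gap t d b \<in> ?gaps" if "b \<le> d" for b
  proof -
    consider "mA \<le> b" | "b < mA" "mB \<le> d - b" | "b < mA" "d - b < mB" by linarith
    then show ?thesis
      using min_gap_eq_dist_ceil_min[OF assms mA mB] min_gap_eq_dist_floor_min[OF assms mA mB]
        min_gap_eq_min_sum[OF assms mA mB] that
      by cases auto
  qed
  then have "min_gap t d ` {..d} \<subseteq> ?gaps" by auto
  then have "card (min_gap t d ` {..d}) \<le> card ?gaps" by (rule card_mono[rotated]) simp
  also have "\<dots> \<le> 3" by (simp add: card_insert_le_m1)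
  finally show ?thesis .
qed

section \<open>The increasing enumeration of \<open>S(t)\<close>\<close>

lemma Sset_memI [intro, simp]: "real i + real j * t \<in> Sset t"
  by (auto simp: Sset_def)

lemma SsetE:
  assumes "x \<in> Sset t"
  obtains i j where "x = real i + real j * t"
  using assms by (auto simp: Sset_def)

lemma Sset_add_one: "x \<in> Sset t \<Longrightarrow> x + 1 \<in> Sset t"
  by (elim SsetE) (metis Sset_memI add.commute add.left_commute of_nat_Suc)

lemma Sset_nonneg: "0 < t \<Longrightarrow> x \<in> Sset t \<Longrightarrow> 0 \<le> x"
  by (auto simp: Sset_def)

lemma finite_Sset_below:
  assumes "0 < t"
  shows "finite {y \<in> Sset t. y < x}"
proof -
  let ?N = "nat \<lceil>x\<rceil>" and ?M = "nat \<lceil>x / t\<rceil>"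
  have "{y \<in> Sset t. y < x} \<subseteq> (\<lambda>(i, j). real i + real j * t) ` ({..?N} \<times> {..?M})"
  proof
    fix y assume "y \<in> {y \<in> Sset t. y < x}"
    then obtain i j where y: "y = real i + real j * t" "y < x" by (auto elim: SsetE)
    have "0 \<le> real j * t" using assms by simp
    then have "real i < x" "real j * t < x" using y by linarith+
    then have "i \<le> ?N" "j \<le> ?M" using assms by (auto simp: pos_less_divide_eq[symmetric]; linarith)+
    then show "y \<in> (\<lambda>(i, j). real i + real j * t) ` ({..?N} \<times> {..?M})" using y by force
  qed
  then show ?thesis by (rule finite_subset) auto
qed

definition S_rank :: "real \<Rightarrow> real \<Rightarrow> nat" where
  "S_rank t x = card {y \<in> Sset t. y < x}"

lemma S_rank_mono: "0 < t \<Longrightarrow> x \<le> x' \<Longrightarrow> S_rank t x \<le> S_rank t x'"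
  unfolding S_rank_def by (rule card_mono[OF finite_Sset_below]) auto

lemma S_rank_strict_mono: "0 < t \<Longrightarrow> x \<in> Sset t \<Longrightarrow> x < x' \<Longrightarrow> S_rank t x < S_rank t x'"
  unfolding S_rank_def by (rule psubset_card_mono[OF finite_Sset_below]) auto

lemma S_rank_surj:
  assumes "0 < t"
  shows "\<exists>x\<in>Sset t. S_rank t x = n"
proof (induction n)
  case 0
  have "{y \<in> Sset t. y < 0} = {}" using Sset_nonneg[OF assms] by force
  then have "S_rank t 0 = 0" unfolding S_rank_def by (metis card.empty)
  moreover have "(0::real) \<in> Sset t" using Sset_memI[of 0 0 t] by simp
  ultimately show ?case by blast
next
  case (Suc n)
  then obtain x where x: "x \<in> Sset t" "S_rank t x = n" by blast
  define A where "A = {y \<in> Sset t. x < y \<and> y \<le> x + 1}"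
  have "finite A"
    unfolding A_def by (rule finite_subset[OF _ finite_Sset_below[OF assms, of "x + 2"]]) auto
  moreover have "x + 1 \<in> A"
    using Sset_add_one[OF x(1)] by (simp add: A_def)
  ultimately have next_in: "Min A \<in> A" and next_le: "\<And>y. y \<in> A \<Longrightarrow> Min A \<le> y"
    by (auto intro: Min_in)
  have "{y \<in> Sset t. y < Min A} = insert x {y \<in> Sset t. y < x}"
    using next_in next_le x(1) by (force simp: A_def)
  then have "S_rank t (Min A) = Suc n"
    using finite_Sset_below[OF assms] x(2) unfolding S_rank_def by simp
  then show ?case using next_in unfolding A_def by blast
qed

lemma s_seq_props:
  assumes "0 < t"
  shows "s_seq t n \<in> Sset t" "S_rank t (s_seq t n) = n"
proof -
  obtain x where x: "x \<in> Sset t" "S_rank t x = n" using S_rank_surj[OF assms] by blast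
  have "x' = x" if "x' \<in> Sset t" "S_rank t x' = n" for x'
    using S_rank_strict_mono[OF assms, of x' x] S_rank_strict_mono[OF assms, of x x'] x that
    by (cases x' x rule: linorder_cases) auto
  then have "\<exists>!x. x \<in> Sset t \<and> S_rank t x = n" using x by blast
  then have "s_seq t n \<in> Sset t \<and> S_rank t (s_seq t n) = n"
    unfolding s_seq_def S_rank_def[symmetric] by (rule theI')
  then show "s_seq t n \<in> Sset t" "S_rank t (s_seq t n) = n" by auto
qed

lemma s_seq_Suc_le:
  assumes "0 < t" "y \<in> Sset t" "s_seq t n < y"
  shows "s_seq t (Suc n) \<le> y"
proof (rule ccontr)
  assume "\<not> ?thesis"
  then have "S_rank t y < Suc n"
    using S_rank_strict_mono[OF assms(1,2)] s_seq_props[OF assms(1)] by (metis not_le)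
  moreover have "n < S_rank t y"
    using S_rank_strict_mono[OF assms(1) s_seq_props(1)[OF assms(1)] assms(3)]
      s_seq_props(2)[OF assms(1)] by simp
  ultimately show False by simp
qed

lemma le_s_seq_if_less_Suc:
  assumes "0 < t" "y \<in> Sset t" "y < s_seq t (Suc n)"
  shows "y \<le> s_seq t n"
  using s_seq_Suc_le[OF assms(1,2), of n] assms(3) by linarith

lemma delta_pos: "0 < t \<Longrightarrow> 0 < delta t n"
  using S_rank_mono[of t "s_seq t (Suc n)" "s_seq t n"] s_seq_props[of t]
  unfolding delta_def by fastforce

lemma delta_le_one:
  assumes "0 < t"
  shows "delta t n \<le> 1"
  using s_seq_Suc_le[OF assms Sset_add_one[OF s_seq_props(1)[OF assms]], of n n]
  unfolding delta_def by simp

lemma delta_le_dist_ceil: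
  assumes "t \<notin> \<rat>" "0 < t" "s_seq t n = real a + real b * t" "m \<in> {1..b}"
  shows "delta t n \<le> dist_ceil t m"
proof -
  define y where "y = real (a + nat \<lceil>real m * t\<rceil>) + real (b - m) * t"
  have y: "y = s_seq t n + dist_ceil t m"
    using assms(2-4) unfolding y_def dist_ceil_def by (simp add: of_nat_diff algebra_simps)
  have "0 < dist_ceil t m" using dist_ceil_pos[OF assms(1)] assms(4) by simp
  then have "s_seq t n < y" using y by simp
  moreover have "y \<in> Sset t" unfolding y_def by (rule Sset_memI)
  ultimately have "s_seq t (Suc n) \<le> y" using s_seq_Suc_le[OF assms(2)] by blast
  then show ?thesis using y unfolding delta_def by simp
qed

lemma delta_le_dist_floor:
  assumes "t \<notin> \<rat>" "0 < t" "s_seq t (Suc n) = real a + real b * t" "m \<in> {1..b}"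
  shows "delta t n \<le> dist_floor t m"
proof -
  define y where "y = real (a + nat \<lfloor>real m * t\<rfloor>) + real (b - m) * t"
  have y: "y = s_seq t (Suc n) - dist_floor t m"
    using assms(2-4) unfolding y_def dist_floor_def by (simp add: of_nat_diff algebra_simps)
  have "0 < dist_floor t m" using dist_floor_pos[OF assms(1)] assms(4) by simp
  then have "y < s_seq t (Suc n)" using y by simp
  moreover have "y \<in> Sset t" unfolding y_def by (rule Sset_memI)
  ultimately have "y \<le> s_seq t n" using le_s_seq_if_less_Suc[OF assms(2)] by blast
  then show ?thesis using y unfolding delta_def by simp
qed

lemma delta_ge_dist:
  assumes "0 < t" "s_seq t n = real a + real b * t" "s_seq t (Suc n) = real a' + real b' * t"
  shows "1 \<le> delta t n \<or> (\<exists>m\<in>{1..b}. dist_ceil t m \<le> delta t n)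
           \<or> (\<exists>m\<in>{1..b' - b}. dist_floor t m \<le> delta t n)"
proof -
  have gap: "delta t n = (real a' - real a) + (real b' - real b) * t"
    using assms(2,3) unfolding delta_def by (simp add: algebra_simps)
  have pos: "0 < delta t n" using delta_pos[OF assms(1)] .
  consider "b' = b" | "b' < b" | "b < b'" by linarith
  then show ?thesis
  proof cases
    case 1
    then have "a < a'" using gap pos by simp
    then show ?thesis using gap 1 by simp
  next
    case 2
    have "delta t n = real_of_int (int a' - int a) - real (b - b') * t"
      using gap 2 by (simp add: of_nat_diff algebra_simps)
    then have "dist_ceil t (b - b') \<le> delta t n"
      using dist_ceil_le[of "int a' - int a" "b - b'" t] pos by simp
    then show ?thesis using 2 by force
  next
    case 3
    have "delta t n = real (b' - b) * t - real_of_int (int a - int a')"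
      using gap 3 by (simp add: of_nat_diff algebra_simps)
    then have "dist_floor t (b' - b) \<le> delta t n"
      using dist_floor_le[of "b' - b" t "int a - int a'"] pos by simp
    then show ?thesis using 3 by force
  qed
qed

section \<open>Palindromic runs of gaps\<close>

lemma palindromic_gaps_sum_const:
  assumes pal: "\<And>k. k < L \<Longrightarrow> delta t (i + k) = delta t (i + (L - 1 - k))" and "k \<le> L"
  shows "s_seq t (i + k) + s_seq t (i + (L - k)) = s_seq t i + s_seq t (i + L)"
  using \<open>k \<le> L\<close>
proof (induction k)
  case 0
  then show ?case by simp
next
  case (Suc k)
  have "i + (L - k) = Suc (i + (L - Suc k))" using Suc.prems by simp
  then have "s_seq t (i + (L - k)) = s_seq t (i + (L - Suc k)) + delta t (i + (L - Suc k))"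
    unfolding delta_def by simp
  moreover have "s_seq t (i + Suc k) = s_seq t (i + k) + delta t (i + k)"
    unfolding delta_def by simp
  moreover have "delta t (i + k) = delta t (i + (L - Suc k))"
    using pal[of k] Suc.prems by simp
  ultimately show ?case using Suc by simp
qed

lemma palindromic_window_coords:
  assumes "t \<notin> \<rat>" "0 < t"
    and pal: "\<And>k. k < L \<Longrightarrow> delta t (i + k) = delta t (i + (L - 1 - k))"
  obtains d where "\<And>k. k \<le> L \<Longrightarrow> \<exists>a b a'. s_seq t (i + k) = real a + real b * t \<and> b \<le> d
      \<and> s_seq t (i + (L - k)) = real a' + real (d - b) * t"
proof -
  obtain c0 d0 where 0: "s_seq t i = real c0 + real d0 * t"
    using s_seq_props(1)[OF assms(2)] by (blast elim: SsetE)
  obtain c1 d1 where 1: "s_seq t (i + L) = real c1 + real d1 * t"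
    using s_seq_props(1)[OF assms(2)] by (blast elim: SsetE)
  have "\<exists>a b a'. s_seq t (i + k) = real a + real b * t \<and> b \<le> d0 + d1
      \<and> s_seq t (i + (L - k)) = real a' + real (d0 + d1 - b) * t" if "k \<le> L" for k
  proof -
    obtain a b where ab: "s_seq t (i + k) = real a + real b * t"
      using s_seq_props(1)[OF assms(2)] by (blast elim: SsetE)
    obtain a' b' where ab': "s_seq t (i + (L - k)) = real a' + real b' * t"
      using s_seq_props(1)[OF assms(2)] by (blast elim: SsetE)
    have "real (a + a') + real (b + b') * t = real (c0 + c1) + real (d0 + d1) * t"
      using palindromic_gaps_sum_const[OF pal that] ab ab' 0 1 by (simp add: algebra_simps)
    then have "b + b' = d0 + d1" using irrational_nat_coords_unique[OF assms(1)] by blast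
    then show ?thesis using ab ab' by (intro exI[of _ a] exI[of _ b] exI[of _ a']) auto
  qed
  then show ?thesis using that by blast
qed

lemma palindromic_window_gaps:
  assumes irr: "t \<notin> \<rat>" and t: "0 < t"
    and pal: "\<And>k. k < L \<Longrightarrow> delta t (i + k) = delta t (i + (L - 1 - k))"
  obtains d where "delta t ` {i..<i + L} \<subseteq> min_gap t d ` {..d}"
proof -
  obtain d where coords: "\<And>k. k \<le> L \<Longrightarrow> \<exists>a b a'. s_seq t (i + k) = real a + real b * t \<and> b \<le> d
      \<and> s_seq t (i + (L - k)) = real a' + real (d - b) * t"
    using palindromic_window_coords[OF irr t pal] by blast
  have "delta t (i + k) \<in> min_gap t d ` {..d}" if k: "k < L" for k
  proof -
    obtain a b a' where ab: "s_seq t (i + k) = real a + real b * t" "b \<le> d"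
      and mirror: "s_seq t (Suc (i + (L - 1 - k))) = real a' + real (d - b) * t"
      using coords[of k] k by (auto simp: Suc_diff_Suc)
    obtain a'' b'' where succ: "s_seq t (Suc (i + k)) = real a'' + real b'' * t" "b'' \<le> d"
      using coords[of "Suc k"] k by auto
    have "min_gap t d b = delta t (i + k)"
    proof (rule min_gap_eqI)
      show "delta t (i + k) \<le> 1" using delta_le_one[OF t] .
      show "delta t (i + k) \<le> dist_ceil t m" if "m \<in> {1..b}" for m
        using delta_le_dist_ceil[OF irr t ab(1) that] .
      show "delta t (i + k) \<le> dist_floor t m" if "m \<in> {1..d - b}" for m
        using delta_le_dist_floor[OF irr t mirror that] pal[OF k] by simp
      have "{1..b'' - b} \<subseteq> {1..d - b}" using succ(2) by auto
      then show "1 \<le> delta t (i + k) \<or> (\<exists>m\<in>{1..b}. dist_ceil t m \<le> delta t (i + k))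
          \<or> (\<exists>m\<in>{1..d - b}. dist_floor t m \<le> delta t (i + k))"
        using delta_ge_dist[OF t ab(1) succ(1)] by blast
    qed
    then show ?thesis using ab(2) by (metis atMost_iff image_eqI)
  qed
  moreover have "n = i + (n - i)" "n - i < L" if "n \<in> {i..<i + L}" for n
    using that by auto
  ultimately have "delta t n \<in> min_gap t d ` {..d}" if "n \<in> {i..<i + L}" for n
    using that by metis
  then show ?thesis using that by blast
qed

section \<open>The Lambda word\<close>

lemma Lambda_word_eq_iff: "Lambda_word t n = Lambda_word t m \<longleftrightarrow> delta t n = delta t m"
proof
  define first where "first x = (LEAST k. delta t k = delta t x)" for x
  have delta_first: "delta t (first x) = delta t x" for x
    unfolding first_def by (rule LeastI) (rule refl)
  have first_le: "delta t k = delta t x \<Longrightarrow> first x \<le> k" for k x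
    unfolding first_def by (rule Least_le)
  have Lambda_word: "Lambda_word t x = card (delta t ` {..< first x})" for x
    unfolding Lambda_word_def first_def by simp
  have less: "Lambda_word t x < Lambda_word t y" if xy: "first x < first y" for x y
  proof -
    have "delta t (first x) \<notin> delta t ` {..< first x}"
    proof
      assume "delta t (first x) \<in> delta t ` {..< first x}"
      then obtain k where "k < first x" "delta t k = delta t x" using delta_first by auto
      then show False using first_le by (simp add: not_le[symmetric])
    qed
    moreover have "insert (delta t (first x)) (delta t ` {..< first x}) \<subseteq> delta t ` {..< first y}"
      using xy by auto
    then have "card (insert (delta t (first x)) (delta t ` {..< first x})) \<le> card (delta t ` {..< first y})"
      by (rule card_mono[rotated]) simp
    ultimately show ?thesis unfolding Lambda_word by simp
  qed
  assume "Lambda_word t n = Lambda_word t m"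
  then have "first n = first m" using less[of n m] less[of m n] by (cases "first n" "first m" rule: linorder_cases) auto
  then show "delta t n = delta t m" using delta_first by metis
next
  assume "delta t n = delta t m"
  then show "Lambda_word t n = Lambda_word t m" unfolding Lambda_word_def by simp
qed

lemma card_Lambda_word_image_le:
  assumes "finite A"
  shows "card (Lambda_word t ` A) \<le> card (delta t ` A)"
proof -
  define label where "label v = card (delta t ` {..< (LEAST k. delta t k = v)})" for v
  have "Lambda_word t ` A = label ` delta t ` A"
    unfolding Lambda_word_def label_def by (simp add: image_image)
  then show ?thesis using assms by (simp add: card_image_le)
qed

theorem corollary6:
  fixes \<theta> :: real and u :: "nat list"
  assumes "\<theta> \<notin> \<rat>" and "1 < \<theta>" and "\<theta> < 2"
    and "is_factor u (Lambda_word \<theta>)" and "palindrome u"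
  shows "card (set u) \<le> 3"
proof -
  define L where "L = length u"
  obtain i where u: "u = map (Lambda_word \<theta>) [i..<i + L]"
    using assms(4) unfolding is_factor_def L_def by blast
  have "delta \<theta> (i + k) = delta \<theta> (i + (L - 1 - k))" if "k < L" for k
  proof -
    have "u ! k = u ! (L - 1 - k)"
      using assms(5) rev_nth[of k u] that unfolding palindrome_def L_def by simp
    then show ?thesis using that u by (simp add: Lambda_word_eq_iff)
  qed
  moreover have "0 < \<theta>" using assms(2) by simp
  ultimately obtain d where window: "delta \<theta> ` {i..<i + L} \<subseteq> min_gap \<theta> d ` {..d}"
    using palindromic_window_gaps[OF assms(1)] by blast
  have "card (set u) \<le> card (delta \<theta> ` {i..<i + L})"
    unfolding u by (simp add: card_Lambda_word_image_le)
  also have "\<dots> \<le> card (min_gap \<theta> d ` {..d})" using window by (simp add: card_mono)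
  also have "\<dots> \<le> 3" using three_gap[OF assms(1)] .
  finally show ?thesis .
qed

end
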